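(* Let $W$ be an sc-Banach space, $E=\mathbb R^n\oplus W$, $C=[0,\infty)^n\oplus W$, identify $W$ with $\{0\}\oplus W$, and let $N$ be a finite-dimensional subspace of $E$ in good position to $C$. Let $\Sigma=\bigcup_{a\in C\cap N,\,a\neq0}\sigma_a$, $\Sigma^c=\{1,\dots,n\}\setminus\Sigma$, and let $\widetilde N$ be an algebraic complement of $N\cap W$ in $N$. Then either $\widetilde N\cap(\mathbb R^{\Sigma^c}\oplus W)=\{0\}$ or $\widetilde N\subset\mathbb R^{\Sigma^c}\oplus W$; in the second case $\dim\widetilde N=1$ and $\Sigma=\emptyset$.
   Context: An sc-Banach space is a Banach space $W$ with nested Banach spaces $W=W_0\supset W_1\supset\cdots$, compact inclusions $W_n\to W_m$ ($m<n$), $\bigcap W_m$ dense in each $W_m$; $E$ has levels $\mathbb R^n\oplus W_m$ and $\|\cdot\|$ is its level-$0$ norm. For $a=(a_1,\dots,a_n,a_\infty)\in C$, $\sigma_a=\{i\in\{1,\dots,n\}: a_i=0\}$; for $S\subset\{1,\dots,n\}$, $\mathbb R^S=\{x\in\mathbb R^n:x_j=0\text{ for } j\notin S\}$. An sc-complement of $N$ is a closed subspace $N^\perp$ with $E_m=(N\cap E_m)\oplus(N^\perp\cap E_m)$ topologically for all $m$, both sc-subspaces. $N$ is in good position to $C$ if $N\cap C$ has nonempty interior in $N$ and there exist an sc-complement $N^\perp$ and $c>0$ such that for every $(n,m)\in N\oplus N^\perp$ with $\|m\|\le c\|n\|$: $n+m\in C$ iff $n\in C$. *)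

theory Defs
  imports "HOL-Analysis.Analysis"
begin

definition is_norm_on :: "'w::real_vector set \<Rightarrow> ('w \<Rightarrow> real) \<Rightarrow> bool" where
  "is_norm_on V p \<longleftrightarrow>
     (\<forall>x\<in>V. p x \<ge> 0 \<and> (p x = 0 \<longleftrightarrow> x = 0)) \<and>
     (\<forall>x\<in>V. \<forall>y\<in>V. p (x + y) \<le> p x + p y) \<and>
     (\<forall>x\<in>V. \<forall>r::real. p (r *\<^sub>R x) = \<bar>r\<bar> * p x)"

definition sc_structure :: "(nat \<Rightarrow> 'w::banach set) \<Rightarrow> (nat \<Rightarrow> 'w \<Rightarrow> real) \<Rightarrow> bool" where
  "sc_structure Wl nw \<longleftrightarrow>
     Wl 0 = UNIV \<and> nw 0 = norm \<and>
     (\<forall>m. subspace (Wl m) \<and> is_norm_on (Wl m) (nw m)) \<and>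
     (\<forall>m. \<forall>X::nat \<Rightarrow> 'w. (\<forall>k. X k \<in> Wl m) \<longrightarrow>
          (\<forall>e>0. \<exists>K. \<forall>i\<ge>K. \<forall>j\<ge>K. nw m (X i - X j) < e) \<longrightarrow>
          (\<exists>L\<in>Wl m. (\<lambda>k. nw m (X k - L)) \<longlonglongrightarrow> 0)) \<and>
     (\<forall>m. Wl (Suc m) \<subseteq> Wl m) \<and>
     (\<forall>m k. m < k \<longrightarrow> (\<forall>(X::nat \<Rightarrow> 'w) B. (\<forall>i. X i \<in> Wl k \<and> nw k (X i) \<le> B) \<longrightarrow>
          (\<exists>r L. strict_mono r \<and> L \<in> Wl m \<and> (\<lambda>i. nw m (X (r i) - L)) \<longlonglongrightarrow> 0))) \<and>
     (\<forall>m. \<forall>x\<in>Wl m. \<forall>e>0. \<exists>y\<in>(\<Inter>k. Wl k). nw m (x - y) < e)"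

text \<open>E = R^n (+) W is modelled as the product type (real^'n) \<times> 'w;
 its levels are E_m = R^n (+) W_m with level norm |x| + nw m w.\<close>

definition E_level :: "(nat \<Rightarrow> 'w set) \<Rightarrow> nat \<Rightarrow> ((real^'n) \<times> 'w) set" where
  "E_level Wl m = UNIV \<times> Wl m"

definition E_norm :: "(nat \<Rightarrow> 'w \<Rightarrow> real) \<Rightarrow> nat \<Rightarrow> ((real^'n) \<times> 'w::real_normed_vector) \<Rightarrow> real" where
  "E_norm nw m z = norm (fst z) + nw m (snd z)"

text \<open>sc-subspace: closed linear subspace F with F \<inter> E_\<infinity> dense in each F \<inter> E_m
 (so that the induced filtration is again an sc-structure).\<close>

definition sc_subspace :: "(nat \<Rightarrow> 'w::banach set) \<Rightarrow> (nat \<Rightarrow> 'w \<Rightarrow> real) \<Rightarrow> ((real^'n) \<times> 'w) set \<Rightarrow> bool" where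
  "sc_subspace Wl nw F \<longleftrightarrow> subspace F \<and> closed F \<and>
     (\<forall>m. \<forall>x\<in>F \<inter> E_level Wl m. \<forall>e>0.
        \<exists>y\<in>F \<inter> (\<Inter>k. E_level Wl k). E_norm nw m (x - y) < e)"

text \<open>sc-complement Np of N: closed subspace with E_m = (N \<inter> E_m) (+) (Np \<inter> E_m)
 topologically (direct sum with bounded projection) for all m; both sc-subspaces.\<close>

definition sc_complement :: "(nat \<Rightarrow> 'w::banach set) \<Rightarrow> (nat \<Rightarrow> 'w \<Rightarrow> real) \<Rightarrow> ((real^'n) \<times> 'w) set \<Rightarrow> ((real^'n) \<times> 'w) set \<Rightarrow> bool" where
  "sc_complement Wl nw N Np \<longleftrightarrow>
     sc_subspace Wl nw N \<and> sc_subspace Wl nw Np \<and> N \<inter> Np = {0} \<and>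
     (\<forall>m. (\<forall>z\<in>E_level Wl m. \<exists>a\<in>N \<inter> E_level Wl m. \<exists>b\<in>Np \<inter> E_level Wl m. z = a + b) \<and>
          (\<exists>K>0. \<forall>a\<in>N \<inter> E_level Wl m. \<forall>b\<in>Np \<inter> E_level Wl m.
              E_norm nw m a \<le> K * E_norm nw m (a + b)))"

definition quadrant :: "((real^'n) \<times> 'w) set" where
  "quadrant = {z. \<forall>i. fst z $ i \<ge> 0}"

definition good_position :: "(nat \<Rightarrow> 'w::banach set) \<Rightarrow> (nat \<Rightarrow> 'w \<Rightarrow> real) \<Rightarrow> ((real^'n) \<times> 'w) set \<Rightarrow> ((real^'n) \<times> 'w) set \<Rightarrow> bool" where
  "good_position Wl nw C N \<longleftrightarrow>
     (\<exists>U. openin (top_of_set N) U \<and> U \<noteq> {} \<and> U \<subseteq> N \<inter> C) \<and>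
     (\<exists>Np c. sc_complement Wl nw N Np \<and> c > 0 \<and>
        (\<forall>a\<in>N. \<forall>b\<in>Np. norm b \<le> c * norm a \<longrightarrow> (a + b \<in> C \<longleftrightarrow> a \<in> C)))"

definition sigma_set :: "((real^'n) \<times> 'w) \<Rightarrow> 'n set" where
  "sigma_set a = {i. fst a $ i = 0}"

definition coord_sub :: "'n set \<Rightarrow> ((real^'n) \<times> 'w) set" where
  "coord_sub S = {z. \<forall>j. j \<notin> S \<longrightarrow> fst z $ j = 0}"

definition W_part :: "((real^'n) \<times> 'w::zero) set" where
  "W_part = {z. fst z = 0}"

end

theory Submission
  imports Defs
begin

text \<open>Suppose a nonzero \<open>z \<in> Nt\<close> vanishes on the coordinates in \<open>\<Sigma>\<close>. Then \<open>fst z \<noteq> 0\<close>,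
  so \<open>z\<close> or \<open>-z\<close> has a negative coordinate, necessarily outside \<open>\<Sigma>\<close>. Sliding a point of
  \<open>C \<inter> N\<close> along that direction until it leaves the quadrant produces a point of \<open>C \<inter> N\<close>
  with a zero coordinate outside \<open>\<Sigma>\<close>, which must therefore be \<open>0\<close>: so \<open>C \<inter> N\<close> lies on the
  line through \<open>z\<close>. As \<open>C \<inter> N\<close> has interior in \<open>N\<close>, this line is all of \<open>N\<close> and equals \<open>Nt\<close>.
  Finally, if some coordinate vanishes on all of \<open>N\<close>, good position leaves no room for a
  nonzero point of \<open>C \<inter> N\<close>: perturbing it inside the sc-complement in the direction of
  the corresponding negative unit vector makes that coordinate negative.\<close>

lemma subspace_subset_span_openin:
  fixes N U :: "'a::real_normed_vector set"
  assumes "subspace N" and "openin (top_of_set N) U" and "U \<noteq> {}"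
  shows "N \<subseteq> span U"
proof
  fix v assume vN: "v \<in> N"
  obtain u where uU: "u \<in> U" using assms(3) by blast
  then have uN: "u \<in> N" using assms(2) openin_imp_subset by blast
  obtain e where e: "e > 0" and ball: "ball u e \<inter> N \<subseteq> U"
    using assms(2) uU unfolding openin_contains_ball by blast
  show "v \<in> span U"
  proof (cases "v = 0")
    case True then show ?thesis by (simp add: span_zero)
  next
    case False
    define r where "r = e / 2 / norm v"
    have r: "r > 0" using False e by (simp add: r_def)
    have "dist u (u + r *\<^sub>R v) = e / 2"
      using r e False by (simp add: dist_norm r_def)
    then have "u + r *\<^sub>R v \<in> U"
      using ball e uN vN assms(1) by (auto simp: subspace_add subspace_scale)
    then have "r *\<^sub>R v \<in> span U"
      using span_diff[OF span_base span_base, of "u + r *\<^sub>R v" U u] uU by simp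
    then have "(1 / r) *\<^sub>R (r *\<^sub>R v) \<in> span U" by (rule span_scale)
    then show ?thesis using r by simp
  qed
qed

lemma good_position_subset_subspace:
  assumes "good_position Wl nw C N" "subspace N" "C \<inter> N \<subseteq> V" "subspace V"
  shows "N \<subseteq> V"
proof -
  obtain U where U: "openin (top_of_set N) U" "U \<noteq> {}" and "U \<subseteq> N \<inter> C"
    using assms(1) unfolding good_position_def by blast
  then have "U \<subseteq> V" using assms(3) by blast
  then have "span U \<subseteq> V" using assms(4) by (rule span_minimal)
  then show ?thesis using subspace_subset_span_openin[OF assms(2) U] by blast
qed

lemma subspace_coord_sub: "subspace (coord_sub S)"
  by (auto simp: subspace_def coord_sub_def)

lemma span_singleton_subset_coord_sub:
  "z \<in> coord_sub S \<Longrightarrow> span {z} \<subseteq> coord_sub S"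
  by (simp add: span_minimal subspace_coord_sub)

lemma quadrant_ray_exit:
  assumes a: "a \<in> quadrant" and dk: "fst d $ k0 < 0"
  obtains t k where "t \<ge> 0" "fst d $ k < 0" "a + t *\<^sub>R d \<in> quadrant" "fst (a + t *\<^sub>R d) $ k = 0"
proof -
  define I where "I = {i. fst d $ i < 0}"
  define f where "f i = fst a $ i / - fst d $ i" for i
  define t where "t = Min (f ` I)"
  have I: "finite I" "k0 \<in> I" using dk by (simp_all add: I_def)
  then obtain k where k: "k \<in> I" "t = f k"
    unfolding t_def by (metis (mono_tags) Min_in empty_iff finite_imageI image_iff image_is_empty)
  have a0: "fst a $ i \<ge> 0" for i using a by (simp add: quadrant_def)
  have dk: "fst d $ k < 0" using k by (simp add: I_def)
  have t0: "t \<ge> 0" using k a0[of k] dk by (simp add: f_def divide_nonneg_neg)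
  have "fst (a + t *\<^sub>R d) $ i \<ge> 0" for i
  proof (cases "i \<in> I")
    case True
    then have "t \<le> fst a $ i / - fst d $ i" and di: "- fst d $ i > 0"
      using I unfolding t_def f_def I_def by simp_all
    then have "t * - fst d $ i \<le> fst a $ i" by (metis pos_le_divide_eq)
    then show ?thesis by simp
  next
    case False
    then show ?thesis using t0 a0[of i] by (simp add: I_def)
  qed
  then have "a + t *\<^sub>R d \<in> quadrant" by (simp add: quadrant_def)
  moreover have "fst (a + t *\<^sub>R d) $ k = 0" using dk k by (simp add: f_def field_simps)
  ultimately show ?thesis using that t0 dk by blast
qed

lemma quadrant_inter_subset_span_singleton:
  assumes N: "subspace N" and z: "z \<in> N" "fst z \<noteq> 0"
    and sigma: "\<And>p. p \<in> quadrant \<inter> N \<Longrightarrow> p \<noteq> 0 \<Longrightarrow> sigma_set p \<subseteq> sigma_set z"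
  shows "quadrant \<inter> N \<subseteq> span {z}"
proof
  fix a assume a: "a \<in> quadrant \<inter> N"
  obtain k0 where k0: "fst z $ k0 \<noteq> 0" using z(2) by (metis vec_eq_iff zero_index)
  obtain d where d: "d = z \<or> d = - z" and "fst d $ k0 < 0"
  proof (cases "fst z $ k0 < 0")
    case True then show ?thesis using that[of z] by simp
  next
    case False then show ?thesis using that[of "- z"] k0 by simp
  qed
  then obtain t k where t: "fst d $ k < 0" "a + t *\<^sub>R d \<in> quadrant" "fst (a + t *\<^sub>R d) $ k = 0"
    using a quadrant_ray_exit by blast
  have d_span: "d \<in> span {z}" using d by (auto intro: span_base span_neg)
  then have "a + t *\<^sub>R d \<in> N" using a N z span_minimal[of "{z}" N]
    by (auto intro: subspace_add subspace_scale)
  moreover have "k \<in> sigma_set (a + t *\<^sub>R d)" "k \<notin> sigma_set z"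
    using t d by (auto simp: sigma_set_def)
  ultimately have "a + t *\<^sub>R d = 0" using sigma t(2) by blast
  then have "a = - (t *\<^sub>R d)" by (simp add: eq_neg_iff_add_eq_0)
  then show "a \<in> span {z}" using d_span by (simp add: span_scale span_neg)
qed

lemma good_position_quadrant_inter_trivial:
  assumes "sc_structure Wl nw" and "good_position Wl nw quadrant N"
    and vanish: "\<forall>n\<in>N. fst n $ j = 0"
  shows "quadrant \<inter> N \<subseteq> {0}"
proof
  fix a assume a: "a \<in> quadrant \<inter> N"
  from assms(2) obtain Np c where Np: "sc_complement Wl nw N Np" and c: "c > 0"
    and stable: "\<forall>a\<in>N. \<forall>b\<in>Np. norm b \<le> c * norm a \<longrightarrow> (a + b \<in> quadrant \<longleftrightarrow> a \<in> quadrant)"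
    unfolding good_position_def by blast
  have "(axis j (-1), 0) \<in> E_level Wl 0"
    using assms(1) by (simp add: E_level_def sc_structure_def)
  then obtain n b where n: "n \<in> N" and b: "b \<in> Np" and split: "(axis j (-1), 0) = n + b"
    using Np unfolding sc_complement_def by blast
  have bj: "fst b $ j = -1"
    using arg_cong[OF split, of "\<lambda>x. fst x $ j"] vanish n by simp
  show "a \<in> {0}"
  proof (rule ccontr)
    assume "a \<notin> {0}"
    define s where "s = c * norm a / norm b"
    have b0: "b \<noteq> 0" using bj by auto
    have s: "s > 0" using c b0 \<open>a \<notin> {0}\<close> by (simp add: s_def)
    have "s *\<^sub>R b \<in> Np"
      using Np b by (simp add: sc_complement_def sc_subspace_def subspace_scale)
    moreover have "norm (s *\<^sub>R b) \<le> c * norm a" using s b0 c by (simp add: s_def)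
    ultimately have "a + s *\<^sub>R b \<in> quadrant" using stable a by blast
    then have "0 \<le> fst (a + s *\<^sub>R b) $ j" by (simp add: quadrant_def)
    then show False using bj vanish a s by simp
  qed
qed

theorem lemma6p9:
  fixes Wl :: "nat \<Rightarrow> 'w::banach set" and nw :: "nat \<Rightarrow> 'w \<Rightarrow> real"
    and N Nt :: "((real^'n) \<times> 'w) set"
  assumes "sc_structure Wl nw"
    and "subspace N" and "\<exists>B. finite B \<and> span B = N"
    and "good_position Wl nw quadrant N"
    and "subspace Nt" and "Nt \<subseteq> N" and "Nt \<inter> (N \<inter> W_part) = {0}"
    and "\<forall>z\<in>N. \<exists>a\<in>Nt. \<exists>b\<in>N \<inter> W_part. z = a + b"
  defines "Sig \<equiv> \<Union>{sigma_set a | a. a \<in> quadrant \<inter> N \<and> a \<noteq> 0}"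
  shows "Nt \<inter> coord_sub (- Sig) = {0} \<or>
         (Nt \<subseteq> coord_sub (- Sig) \<and> dim Nt = 1 \<and> Sig = {})"
proof (cases "Nt \<inter> coord_sub (- Sig) = {0}")
  case False
  moreover have "0 \<in> Nt \<inter> coord_sub (- Sig)"
    using assms(5) subspace_0 subspace_coord_sub by blast
  ultimately obtain z where z: "z \<in> Nt" "z \<noteq> 0" "z \<in> coord_sub (- Sig)" by blast
  have "fst z \<noteq> 0" using z assms(6,7) by (auto simp: W_part_def)
  moreover have "sigma_set p \<subseteq> sigma_set z" if "p \<in> quadrant \<inter> N" "p \<noteq> 0" for p
  proof -
    have "sigma_set p \<subseteq> Sig" using that unfolding Sig_def by blast
    then show ?thesis using z(3) by (auto simp: sigma_set_def coord_sub_def)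
  qed
  ultimately have "quadrant \<inter> N \<subseteq> span {z}"
    using quadrant_inter_subset_span_singleton assms(2,6) z(1) by blast
  then have N_span: "N \<subseteq> span {z}"
    using good_position_subset_subspace[OF assms(4,2)] subspace_span by blast
  moreover have "span {z} \<subseteq> Nt" using assms(5) z(1) by (simp add: span_minimal)
  ultimately have Nt: "Nt = span {z}" using assms(6) by blast
  have N_coord: "N \<subseteq> coord_sub (- Sig)"
    using N_span span_singleton_subset_coord_sub[OF z(3)] by blast
  have "Sig = {}"
  proof (rule ccontr)
    assume "Sig \<noteq> {}"
    then obtain j a where j: "j \<in> Sig" and a: "a \<in> quadrant \<inter> N" "a \<noteq> 0"
      unfolding Sig_def by blast
    have "\<forall>n\<in>N. fst n $ j = 0" using N_coord j by (auto simp: coord_sub_def)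
    then show False using good_position_quadrant_inter_trivial[OF assms(1,4)] a by blast
  qed
  moreover have "dim Nt = 1"
    unfolding Nt dim_span using z(2) by (simp add: dim_eq_card_independent)
  ultimately show ?thesis using Nt span_singleton_subset_coord_sub[OF z(3)] by blast
qed simp

end
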